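(* Let $n,r\ge 1$ be integers, let $u$ be a vertex of $G(n,r)$, let $0\le k\le r$, and let $(i_1,j_1),\dots,(i_k,j_k)$ be positions in an $n\times n$ matrix (not necessarily distinct) such that $u\ge E_n(i_1,j_1)+\dots+E_n(i_k,j_k)$ entrywise. Then there exist vertices $u_1,\dots,u_r$ of $G(n,1)$ (i.e. $n\times n$ permutation matrices) with $u=u_1+\dots+u_r$ and such that $u_1+\dots+u_l\ge E_n(i_1,j_1)+\dots+E_n(i_l,j_l)$ entrywise for every $1\le l\le k$.
   Context: For integers $n,r\ge 1$, $G(n,r)$ is the graph whose vertices are the $n\times n$ matrices with non-negative integer entries all of whose row sums and column sums equal $r$ (adjacency is irrelevant here). $E_n(i,j)$ denotes the $n\times n$ matrix with all entries $0$ except the entry in position $(i,j)$, which is $1$. Matrix inequalities are entrywise. *)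

theory Defs
  imports Main
begin

text \<open>An n x n matrix with natural-number entries is modelled as a function
  nat => nat => nat, indices 0..n-1, with all entries outside that range zero.\<close>

definition is_matrix :: "nat \<Rightarrow> (nat \<Rightarrow> nat \<Rightarrow> nat) \<Rightarrow> bool" where
  "is_matrix n A \<longleftrightarrow> (\<forall>i j. (n \<le> i \<or> n \<le> j) \<longrightarrow> A i j = 0)"

definition G_vert :: "nat \<Rightarrow> nat \<Rightarrow> (nat \<Rightarrow> nat \<Rightarrow> nat) \<Rightarrow> bool" where
  "G_vert n r A \<longleftrightarrow> is_matrix n A
     \<and> (\<forall>i<n. (\<Sum>j<n. A i j) = r) \<and> (\<forall>j<n. (\<Sum>i<n. A i j) = r)"

definition E_mat :: "nat \<Rightarrow> nat \<Rightarrow> nat \<Rightarrow> nat \<Rightarrow> nat" where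
  "E_mat i j = (\<lambda>a b. if a = i \<and> b = j then 1 else 0)"

definition mat_le :: "(nat \<Rightarrow> nat \<Rightarrow> nat) \<Rightarrow> (nat \<Rightarrow> nat \<Rightarrow> nat) \<Rightarrow> bool" where
  "mat_le A B \<longleftrightarrow> (\<forall>a b. A a b \<le> B a b)"

end

theory Submission
  imports Defs "HOL-Combinatorics.Permutations"
begin

(*
  The proof has three parts.
  (1) Hall's marriage theorem, proved by strong induction on the number of index sets,
      splitting on whether some proper nonempty subfamily is critical (tight).
  (2) Birkhoff--Koenig: the supports of the rows of an r-regular matrix (r > 0) satisfy
      Hall's condition by double counting, so such a matrix lies above a permutation
      matrix; subtracting it leaves an (r-1)-regular matrix, hence every r-regular matrix
      is a sum of r permutation matrices.
  (3) A reordering lemma for arbitrary families f_1,...,f_r of nat-valued functions: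
      if the multiplicities of a sequence p_1,...,p_k (k <= r) are bounded by the sum of
      all f_s, the summands can be permuted so that each prefix p_1..p_l is bounded by
      the l-th partial sum. Induction on k: the next point p_(l+1) is supplied either by
      the current (l+1)-st summand or, swapping it in, by a later one.
  The theorem follows by applying (3) to the decomposition from (2), reading matrices as
  functions on pairs of indices.
*)

definition hall_condition :: "'i set \<Rightarrow> ('i \<Rightarrow> 'a set) \<Rightarrow> bool" where
  "hall_condition I A \<longleftrightarrow> (\<forall>J\<subseteq>I. card J \<le> card (\<Union>(A ` J)))"

definition is_sdr :: "('i \<Rightarrow> 'a) \<Rightarrow> 'i set \<Rightarrow> ('i \<Rightarrow> 'a set) \<Rightarrow> bool" where
  "is_sdr f I A \<longleftrightarrow> inj_on f I \<and> (\<forall>i\<in>I. f i \<in> A i)"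

lemma hall_condition_subset: "hall_condition I A \<Longrightarrow> J \<subseteq> I \<Longrightarrow> hall_condition J A"
  by (auto simp: hall_condition_def)

lemma sdr_union:
  assumes f: "is_sdr f J A" "\<forall>i\<in>J. f i \<in> B" and g: "is_sdr g K (\<lambda>i. A i - B)"
  shows "is_sdr (\<lambda>i. if i \<in> J then f i else g i) (J \<union> K) A"
  unfolding is_sdr_def
proof
  show "inj_on (\<lambda>i. if i \<in> J then f i else g i) (J \<union> K)"
  proof (rule inj_onI)
    fix i j assume ij: "i \<in> J \<union> K" "j \<in> J \<union> K"
      and eq: "(if i \<in> J then f i else g i) = (if j \<in> J then f j else g j)"
    have f_in: "f l \<in> B" if "l \<in> J" for l using f that by blast
    have g_out: "g l \<notin> B" if "l \<in> K" for l using g that by (auto simp: is_sdr_def)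
    show "i = j"
    proof (cases "i \<in> J"; cases "j \<in> J")
      assume "i \<in> J" "j \<in> J"
      then show ?thesis using eq f(1) by (simp add: is_sdr_def inj_on_def)
    next
      assume "i \<notin> J" "j \<notin> J"
      then show ?thesis using eq ij g by (simp add: is_sdr_def inj_on_def)
    next
      assume "i \<in> J" "j \<notin> J"
      then show ?thesis using eq ij f_in g_out by force
    next
      assume "i \<notin> J" "j \<in> J"
      then show ?thesis using eq ij f_in g_out by force
    qed
  qed
qed (use f g in \<open>auto simp: is_sdr_def\<close>)

lemma hall_condition_critical_remove:
  assumes fin: "finite I" "\<forall>i\<in>I. finite (A i)" and hall: "hall_condition I A"
    and J: "J \<subseteq> I" "card (\<Union>(A ` J)) = card J"
  shows "hall_condition (I - J) (\<lambda>i. A i - \<Union>(A ` J))"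
  unfolding hall_condition_def
proof (intro allI impI)
  fix K assume K: "K \<subseteq> I - J"
  define B where "B = \<Union>(A ` J)"
  have fin_JK: "finite J" "finite K" using J(1) K fin(1) finite_subset by blast+
  have fin_B: "finite B" using fin_JK(1) J(1) fin(2) by (auto simp: B_def)
  have fin_KB: "finite (\<Union>i\<in>K. A i - B)" using fin_JK(2) K fin(2) by auto
  have "card K + card J = card (K \<union> J)" using K fin_JK by (subst card_Un_disjoint) auto
  also have "\<dots> \<le> card (\<Union>(A ` (K \<union> J)))"
    using hall K J(1) unfolding hall_condition_def by (metis Diff_subset Un_subset_iff subset_trans)
  also have "\<Union>(A ` (K \<union> J)) = (\<Union>i\<in>K. A i - B) \<union> B" unfolding B_def by blast
  also have "card \<dots> = card (\<Union>i\<in>K. A i - B) + card J"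
    using fin_B fin_KB J(2) by (subst card_Un_disjoint) (auto simp: B_def)
  finally show "card K \<le> card (\<Union>i\<in>K. A i - \<Union>(A ` J))" by (simp add: B_def)
qed

lemma hall_condition_noncritical_remove:
  assumes fin: "finite I" "\<forall>i\<in>I. finite (A i)"
    and noncrit: "\<forall>J\<subseteq>I. J \<noteq> {} \<longrightarrow> J \<noteq> I \<longrightarrow> card J < card (\<Union>(A ` J))"
    and i0: "i0 \<in> I"
  shows "hall_condition (I - {i0}) (\<lambda>i. A i - {x})"
  unfolding hall_condition_def
proof (intro allI impI)
  fix K assume K: "K \<subseteq> I - {i0}"
  show "card K \<le> card (\<Union>i\<in>K. A i - {x})"
  proof (cases "K = {}")
    case False
    have K_sub: "K \<subseteq> I" and K_ne: "K \<noteq> I" using K i0 by blast+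
    then have "finite K" using fin(1) finite_subset by blast
    then have "finite (\<Union>(A ` K))" using K_sub fin(2) by auto
    moreover have "card K < card (\<Union>(A ` K))" using noncrit K_sub False K_ne by simp
    moreover have "(\<Union>i\<in>K. A i - {x}) = \<Union>(A ` K) - {x}" by blast
    ultimately show ?thesis by (simp add: card_Diff_singleton_if) linarith
  qed simp
qed

theorem hall:
  assumes "finite I" "\<forall>i\<in>I. finite (A i)" "hall_condition I A"
  shows "\<exists>f. is_sdr f I A"
  using assms
proof (induction "card I" arbitrary: I A rule: less_induct)
  case less
  have fin_sub: "finite J" "\<forall>i\<in>J. finite (A i - X)" if "J \<subseteq> I" for J X
    using that less.prems(1,2) finite_subset by auto
  show ?case
  proof (cases "\<exists>J\<subseteq>I. J \<noteq> {} \<and> J \<noteq> I \<and> card (\<Union>(A ` J)) \<le> card J")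
    case True
    \<comment> \<open>a proper subfamily J is critical: match J inside its neighbourhood, the rest outside it\<close>
    then obtain J where J: "J \<subseteq> I" "J \<noteq> {}" "J \<noteq> I" "card (\<Union>(A ` J)) \<le> card J" by blast
    then have crit: "card (\<Union>(A ` J)) = card J"
      using less.prems(3) unfolding hall_condition_def by (simp add: le_antisym)
    have card_J: "card J < card I" using J(1,3) less.prems(1) by (simp add: psubset_card_mono)
    obtain f where f: "is_sdr f J A"
    proof -
      have "\<forall>i\<in>J. finite (A i)" using J(1) less.prems(2) by auto
      then show ?thesis using less.hyps[OF card_J fin_sub(1)[OF J(1)]]
          hall_condition_subset[OF less.prems(3) J(1)] that by blast
    qed
    have "0 < card J" using fin_sub(1)[OF J(1)] J(2) by (simp add: card_gt_0_iff)
    then have "card (I - J) < card I" using J(1) less.prems(1) card_J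
      by (simp add: card_Diff_subset finite_subset)
    then obtain g where g: "is_sdr g (I - J) (\<lambda>i. A i - \<Union>(A ` J))"
      using less.hyps fin_sub[of "I - J"] hall_condition_critical_remove[OF less.prems J(1) crit]
      by (metis Diff_subset)
    have "\<forall>i\<in>J. f i \<in> \<Union>(A ` J)" using f by (auto simp: is_sdr_def)
    with sdr_union[OF f _ g] have "is_sdr (\<lambda>i. if i \<in> J then f i else g i) (J \<union> (I - J)) A"
      by blast
    moreover have "J \<union> (I - J) = I" using J(1) by blast
    ultimately show ?thesis by auto
  next
    case False
    show ?thesis
    proof (cases "I = {}")
      case True then show ?thesis by (auto simp: is_sdr_def)
    next
      case nonempty: False
      \<comment> \<open>no critical subfamily: match some i0 to any x \<in> A i0 and recurse without x\<close>
      then obtain i0 where i0: "i0 \<in> I" by blast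
      have "card {i0} \<le> card (\<Union>(A ` {i0}))"
        using less.prems(3) i0 unfolding hall_condition_def by blast
      then obtain x where x: "x \<in> A i0" by fastforce
      have noncrit: "\<forall>J\<subseteq>I. J \<noteq> {} \<longrightarrow> J \<noteq> I \<longrightarrow> card J < card (\<Union>(A ` J))"
        using False by (meson not_le)
      have "card (I - {i0}) < card I" using less.prems(1) i0 by (rule card_Diff1_less)
      then obtain g where g: "is_sdr g (I - {i0}) (\<lambda>i. A i - {x})"
        using less.hyps fin_sub[of "I - {i0}"]
          hall_condition_noncritical_remove[OF less.prems(1,2) noncrit i0]
        by (metis Diff_subset)
      have "is_sdr (\<lambda>_. x) {i0} A" using x by (simp add: is_sdr_def)
      with sdr_union[OF _ _ g] have "is_sdr (\<lambda>i. if i \<in> {i0} then x else g i) ({i0} \<union> (I - {i0})) A"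
        by blast
      moreover have "{i0} \<union> (I - {i0}) = I" using i0 by blast
      ultimately show ?thesis by auto
    qed
  qed
qed

lemma G_vert_zero: "G_vert n 0 u \<Longrightarrow> u = (\<lambda>a b. 0)"
proof (intro ext)
  fix a b assume u: "G_vert n 0 u"
  show "u a b = 0"
  proof (cases "a < n \<and> b < n")
    case True
    then have "(\<Sum>j<n. u a j) = 0" using u by (simp add: G_vert_def)
    then show ?thesis using True by simp
  next
    case False then show ?thesis using u by (auto simp: G_vert_def is_matrix_def)
  qed
qed

lemma G_vert_diff:
  assumes u: "G_vert n (r + s) u" and P: "G_vert n s P" and le: "mat_le P u"
  shows "G_vert n r (\<lambda>a b. u a b - P a b)"
proof -
  have le': "P a b \<le> u a b" for a b using le by (simp add: mat_le_def)
  have "(\<Sum>j<n. u i j - P i j) = r" if "i < n" for i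
    using that u P by (simp add: sum_subtractf_nat le' G_vert_def)
  moreover have "(\<Sum>i<n. u i j - P i j) = r" if "j < n" for j
    using that u P by (simp add: sum_subtractf_nat le' G_vert_def)
  moreover have "is_matrix n (\<lambda>a b. u a b - P a b)" using u by (simp add: G_vert_def is_matrix_def)
  ultimately show ?thesis by (simp add: G_vert_def)
qed

definition perm_matrix :: "nat \<Rightarrow> (nat \<Rightarrow> nat) \<Rightarrow> nat \<Rightarrow> nat \<Rightarrow> nat" where
  "perm_matrix n f a b = (if a < n \<and> b < n \<and> f a = b then 1 else 0)"

lemma G_vert_perm_matrix:
  assumes f: "bij_betw f {..<n} {..<n}"
  shows "G_vert n 1 (perm_matrix n f)"
proof -
  have "(\<Sum>j<n. perm_matrix n f i j) = 1" if i: "i < n" for i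
  proof -
    have "f i < n" using f i by (auto simp: bij_betw_def)
    then show ?thesis using i by (simp add: perm_matrix_def)
  qed
  moreover have "(\<Sum>i<n. perm_matrix n f i j) = 1" if j: "j < n" for j
  proof -
    obtain i0 where i0: "i0 < n" "f i0 = j" using f j by (metis bij_betw_imp_surj_on imageE lessThan_iff)
    have "(\<Sum>i<n. perm_matrix n f i j) = (\<Sum>i<n. if i = i0 then 1 else 0)"
      using f i0 j by (intro sum.cong) (auto simp: perm_matrix_def bij_betw_def inj_on_def)
    then show ?thesis using i0 by simp
  qed
  ultimately show ?thesis by (simp add: G_vert_def is_matrix_def perm_matrix_def)
qed

(* Double counting: r |I| <= r |N(I)| for any set I of rows and the set N(I) of columns
   where these rows have positive entries. *)
lemma regular_support_hall:
  assumes u: "G_vert n r u" and r: "0 < r"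
  shows "hall_condition {..<n} (\<lambda>i. {j. j < n \<and> 0 < u i j})"
  unfolding hall_condition_def
proof (intro allI impI)
  fix I assume I: "I \<subseteq> {..<n}"
  define N where "N = (\<Union>i\<in>I. {j. j < n \<and> 0 < u i j})"
  have N_sub: "N \<subseteq> {..<n}" by (auto simp: N_def)
  then have N: "N \<subseteq> {..<n}" "finite N" using finite_subset by auto
  have "r * card I = (\<Sum>i\<in>I. \<Sum>j<n. u i j)" using I u by (simp add: G_vert_def subset_iff)
  also have "\<dots> = (\<Sum>i\<in>I. \<Sum>j\<in>N. u i j)"
    using N by (intro sum.cong refl sum.mono_neutral_right) (auto simp: N_def)
  also have "\<dots> = (\<Sum>j\<in>N. \<Sum>i\<in>I. u i j)" by (rule sum.swap)
  also have "\<dots> \<le> (\<Sum>j\<in>N. \<Sum>i<n. u i j)" using I by (intro sum_mono sum_mono2) auto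
  also have "\<dots> = r * card N" using N u by (simp add: G_vert_def subset_iff)
  finally show "card I \<le> card N" using r by simp
qed

lemma perm_matrix_below:
  assumes u: "G_vert n r u" and r: "0 < r"
  shows "\<exists>P. G_vert n 1 P \<and> mat_le P u"
proof -
  define A where "A = (\<lambda>i. {j. j < n \<and> 0 < u i j})"
  obtain f where f: "is_sdr f {..<n} A"
    using hall[of "{..<n}" A] regular_support_hall[OF u r] unfolding A_def by auto
  then have "f ` {..<n} \<subseteq> {..<n}" "inj_on f {..<n}" by (auto simp: is_sdr_def A_def)
  then have "bij_betw f {..<n} {..<n}" by (simp add: bij_betw_def endo_inj_surj)
  moreover have "mat_le (perm_matrix n f) u"
    using f by (auto simp: mat_le_def perm_matrix_def is_sdr_def A_def Suc_le_eq)
  ultimately show ?thesis using G_vert_perm_matrix by blast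
qed

theorem regular_decomposition:
  "G_vert n r u \<Longrightarrow> \<exists>us. (\<forall>s\<in>{1..r}. G_vert n 1 (us s)) \<and> u = (\<lambda>a b. \<Sum>s=1..r. us s a b)"
proof (induction r arbitrary: u)
  case 0
  then show ?case using G_vert_zero by auto
next
  case (Suc r)
  obtain P where P: "G_vert n 1 P" "mat_le P u" using perm_matrix_below[OF Suc.prems] by auto
  have "G_vert n r (\<lambda>a b. u a b - P a b)" using G_vert_diff[of n r 1 u P] Suc.prems P by simp
  then obtain us where us: "\<forall>s\<in>{1..r}. G_vert n 1 (us s)"
    "(\<lambda>a b. u a b - P a b) = (\<lambda>a b. \<Sum>s=1..r. us s a b)"
    using Suc.IH by blast
  define vs where "vs = us(Suc r := P)"
  have "(\<Sum>s=1..Suc r. vs s a b) = u a b" for a b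
  proof -
    have "(\<Sum>s=1..Suc r. vs s a b) = (\<Sum>s=1..r. us s a b) + P a b"
      by (simp add: vs_def)
    also have "\<dots> = (u a b - P a b) + P a b" using fun_cong[OF fun_cong[OF us(2)], of a b] by simp
    also have "\<dots> = u a b" using P(2) by (simp add: mat_le_def)
    finally show ?thesis .
  qed
  moreover have "\<forall>s\<in>{1..Suc r}. G_vert n 1 (vs s)" using us(1) P(1) by (simp add: vs_def)
  ultimately show ?case by auto
qed

definition occ :: "(nat \<Rightarrow> 'a) \<Rightarrow> nat \<Rightarrow> 'a \<Rightarrow> nat" where
  "occ p l x = (\<Sum>t=1..l. if p t = x then 1 else 0)"

lemma occ_0 [simp]: "occ p 0 x = 0"
  by (simp add: occ_def)

lemma occ_Suc: "occ p (Suc l) x = occ p l x + (if p (Suc l) = x then 1 else 0)"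
  by (simp add: occ_def)

lemma occ_mono: "l \<le> l' \<Longrightarrow> occ p l x \<le> occ p l' x"
  unfolding occ_def by (rule sum_mono2) auto

lemma prefix_sum_transpose:
  fixes g :: "nat \<Rightarrow> 'b::comm_monoid_add"
  assumes "Suc m \<le> s"
  shows "l \<le> m \<Longrightarrow> (\<Sum>i=1..l. g (transpose (Suc m) s i)) = (\<Sum>i=1..l. g i)"
    and "(\<Sum>i=1..Suc m. g (transpose (Suc m) s i)) = (\<Sum>i=1..m. g i) + g s"
proof -
  have fixed: "(\<Sum>i=1..l. g (transpose (Suc m) s i)) = (\<Sum>i=1..l. g i)" if "l \<le> m" for l
    using that assms by (intro sum.cong) (auto simp: transpose_def)
  then show "l \<le> m \<Longrightarrow> (\<Sum>i=1..l. g (transpose (Suc m) s i)) = (\<Sum>i=1..l. g i)" .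
  show "(\<Sum>i=1..Suc m. g (transpose (Suc m) s i)) = (\<Sum>i=1..m. g i) + g s"
    using fixed[of m] by simp
qed

lemma supplier_exists:
  fixes g :: "nat \<Rightarrow> nat"
  assumes mk: "Suc m \<le> k" and kr: "k \<le> r" and x: "p (Suc m) = x"
    and prefix: "occ p m x \<le> (\<Sum>i=1..m. g i)" and total: "occ p k x \<le> (\<Sum>i=1..r. g i)"
  shows "\<exists>s\<in>{Suc m..r}. occ p (Suc m) x \<le> (\<Sum>i=1..m. g i) + g s"
proof (rule ccontr)
  assume none: "\<not> ?thesis"
  have short: "(\<Sum>i=1..m. g i) + g s < occ p m x + 1" if "s \<in> {Suc m..r}" for s
  proof -
    have "\<not> occ p (Suc m) x \<le> (\<Sum>i=1..m. g i) + g s" using none that by blast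
    then show ?thesis using x by (simp add: occ_Suc)
  qed
  have "Suc m \<in> {Suc m..r}" using mk kr by simp
  then have tight: "occ p m x = (\<Sum>i=1..m. g i)" using short prefix by fastforce
  have "g s = 0" if "s \<in> {Suc m..r}" for s using short[OF that] tight by simp
  then have "(\<Sum>i=1..r. g i) = (\<Sum>i=1..m. g i)"
    using sum.ub_add_nat[of 1 m g "r - m"] mk kr by simp
  also have "\<dots> < occ p (Suc m) x" using tight x by (simp add: occ_Suc)
  also have "\<dots> \<le> occ p k x" using mk by (rule occ_mono)
  finally show False using total by simp
qed

theorem greedy_reordering:
  fixes f :: "nat \<Rightarrow> 'a \<Rightarrow> nat" and p :: "nat \<Rightarrow> 'a"
  assumes "k \<le> r" and "\<forall>x. occ p k x \<le> (\<Sum>s=1..r. f s x)"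
  shows "\<exists>\<sigma>. \<sigma> permutes {1..r} \<and> (\<forall>l\<le>k. \<forall>x. occ p l x \<le> (\<Sum>s=1..l. f (\<sigma> s) x))"
  using assms
proof (induction k)
  case 0
  show ?case
  proof (intro exI conjI)
    show "id permutes {1..r}" by (rule permutes_id)
  qed simp
next
  case (Suc m)
  have "\<forall>x. occ p m x \<le> (\<Sum>s=1..r. f s x)"
  proof
    fix x
    have "occ p m x \<le> occ p (Suc m) x" by (rule occ_mono) simp
    then show "occ p m x \<le> (\<Sum>s=1..r. f s x)" using Suc.prems(2)[rule_format, of x] by linarith
  qed
  then obtain \<sigma> where \<sigma>: "\<sigma> permutes {1..r}" and
    good: "\<forall>l\<le>m. \<forall>x. occ p l x \<le> (\<Sum>s=1..l. f (\<sigma> s) x)"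
    using Suc.IH Suc.prems(1) by auto
  define x0 where "x0 = p (Suc m)"
  have total: "(\<Sum>s=1..r. f (\<sigma> s) x) = (\<Sum>s=1..r. f s x)" for x
    using sum.permute[OF \<sigma>, of "\<lambda>s. f s x"] by simp
  obtain s where s: "s \<in> {Suc m..r}"
    and supplied: "occ p (Suc m) x0 \<le> (\<Sum>i=1..m. f (\<sigma> i) x0) + f (\<sigma> s) x0"
  proof -
    have "occ p m x0 \<le> (\<Sum>i=1..m. f (\<sigma> i) x0)" using good by simp
    moreover have "occ p (Suc m) x0 \<le> (\<Sum>i=1..r. f (\<sigma> i) x0)"
      using Suc.prems(2) total by simp
    ultimately have "\<exists>s\<in>{Suc m..r}. occ p (Suc m) x0 \<le> (\<Sum>i=1..m. f (\<sigma> i) x0) + f (\<sigma> s) x0"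
      using Suc.prems(1) by (intro supplier_exists) (simp_all add: x0_def)
    then show ?thesis using that by blast
  qed
  define \<tau> where "\<tau> = \<sigma> \<circ> transpose (Suc m) s"
  have "\<tau> permutes {1..r}"
    unfolding \<tau>_def using s by (intro permutes_compose[OF _ \<sigma>] permutes_swap_id) auto
  moreover have "occ p l x \<le> (\<Sum>i=1..l. f (\<tau> i) x)" if "l \<le> Suc m" for l x
  proof (cases "l \<le> m")
    case True
    have "(\<Sum>i=1..l. f (\<tau> i) x) = (\<Sum>i=1..l. f (\<sigma> i) x)"
      using prefix_sum_transpose(1)[of m s l "\<lambda>i. f (\<sigma> i) x"] s True by (simp add: \<tau>_def)
    then show ?thesis using good True by simp
  next
    case False
    then have l: "l = Suc m" using that by simp
    have "(\<Sum>i=1..Suc m. f (\<tau> i) x) = (\<Sum>i=1..m. f (\<sigma> i) x) + f (\<sigma> s) x"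
      using prefix_sum_transpose(2)[of m s "\<lambda>i. f (\<sigma> i) x"] s by (simp add: \<tau>_def)
    moreover have "occ p m x \<le> (\<Sum>i=1..m. f (\<sigma> i) x)" using good by simp
    ultimately show ?thesis
      using supplied l by (cases "x = x0") (simp_all add: occ_Suc x0_def)
  qed
  ultimately show ?case by blast
qed


lemma sum_E_mat_occ:
  "(\<Sum>t=1..l. E_mat (fst (pos t)) (snd (pos t)) a b) = occ pos l (a, b)"
  unfolding occ_def E_mat_def by (intro sum.cong) auto

theorem lemma2p6:
  fixes n r k :: nat and u :: "nat \<Rightarrow> nat \<Rightarrow> nat" and pos :: "nat \<Rightarrow> nat \<times> nat"
  assumes "n \<ge> 1" and "r \<ge> 1"
    and "G_vert n r u"
    and "k \<le> r"
    and "\<forall>t\<in>{1..k}. fst (pos t) < n \<and> snd (pos t) < n"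
    and "mat_le (\<lambda>a b. \<Sum>t=1..k. E_mat (fst (pos t)) (snd (pos t)) a b) u"
  shows "\<exists>us :: nat \<Rightarrow> nat \<Rightarrow> nat \<Rightarrow> nat.
           (\<forall>s\<in>{1..r}. G_vert n 1 (us s))
         \<and> u = (\<lambda>a b. \<Sum>s=1..r. us s a b)
         \<and> (\<forall>l\<in>{1..k}. mat_le (\<lambda>a b. \<Sum>t=1..l. E_mat (fst (pos t)) (snd (pos t)) a b)
                                 (\<lambda>a b. \<Sum>s=1..l. us s a b))"
proof -
  obtain dec where dec: "\<forall>s\<in>{1..r}. G_vert n 1 (dec s)" "u = (\<lambda>a b. \<Sum>s=1..r. dec s a b)"
    using regular_decomposition[OF assms(3)] by blast
  define f where "f s = (\<lambda>(a, b). dec s a b)" for s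
  have "\<forall>x. occ pos k x \<le> (\<Sum>s=1..r. f s x)"
    using assms(6) dec(2) unfolding mat_le_def sum_E_mat_occ by (auto simp: f_def)
  then obtain \<sigma> where \<sigma>: "\<sigma> permutes {1..r}"
    and prefix: "\<forall>l\<le>k. \<forall>x. occ pos l x \<le> (\<Sum>s=1..l. f (\<sigma> s) x)"
    using greedy_reordering[OF assms(4)] by blast
  have "\<forall>s\<in>{1..r}. G_vert n 1 (dec (\<sigma> s))" using dec(1) permutes_in_image[OF \<sigma>] by blast
  moreover have "u = (\<lambda>a b. \<Sum>s=1..r. dec (\<sigma> s) a b)"
    unfolding dec(2) using sum.permute[OF \<sigma>, of "\<lambda>s. dec s _ _"] by (simp add: comp_def)
  moreover have "\<forall>l\<in>{1..k}. mat_le (\<lambda>a b. \<Sum>t=1..l. E_mat (fst (pos t)) (snd (pos t)) a b)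
                                    (\<lambda>a b. \<Sum>s=1..l. dec (\<sigma> s) a b)"
    using prefix unfolding mat_le_def sum_E_mat_occ by (auto simp: f_def)
  ultimately show ?thesis by (intro exI[where x = "\<lambda>s. dec (\<sigma> s)"]) blast
qed

end
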